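(* Let $\mathcal E$ be an evolution algebra of a "chicken" population (EACP) over a field $K$ with natural basis $\{h_1,\dots,h_n,r\}$ and matrix of structural constants $M=A\oplus \mathbf b$, where $A=(a_{ij})_{i,j=1}^n$ and $\mathbf b=(b_1,\dots,b_n)^T$. Then for every $m\geq 1$ and every $i=1,\dots,n$: \begin{itemize} \item[(i)] $R_r^m(h_i)=(A^m\mathbf h)_i+(A^{m-1}\mathbf b)_i\, r$; \item[(ii)] $(h_ir)^{[m]}=\gamma_m\left[(A^{m+1}\mathbf h)_i+(A^{m}\mathbf b)_i\, r\right]$, where the scalars $\gamma_m$ (depending on $i$) are defined recursively by $\gamma_1=2b_i$ and $\gamma_{m+1}=2\gamma_m^2\,(A^m\mathbf b)_i$. \end{itemize}
   Context: An EACP over a field $K$ is a $K$-algebra $\mathcal E$ with a basis $\{h_1,\dots,h_n,r\}$ (a natural basis) such that $h_ir=rh_i=\sum_{j=1}^n a_{ij}h_j+b_ir$, $h_ih_j=0$ for all $i,j=1,\dots,n$, and $rr=0$. Write $A^m=(a^{(m)}_{ij})$ for the $m$-th power of $A$ (with $A^0$ the identity matrix), $(A^m\mathbf h)_i=\sum_{j=1}^n a^{(m)}_{ij}h_j$, and $(A^m\mathbf b)_i=\sum_{j=1}^n a^{(m)}_{ij}b_j$. The right multiplication operator is $R_r(x)=xr$, and $R_r^m$ is its $m$-fold iterate. Plenary powers are defined by $a^{[1]}=a\cdot a$ and $a^{[m]}=a^{[m-1]}a^{[m-1]}$ for $m\geq 2$. *)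

theory Defs
  imports Complex_Main
begin

fun matpow :: "nat \<Rightarrow> (nat \<Rightarrow> nat \<Rightarrow> 'k::field) \<Rightarrow> nat \<Rightarrow> nat \<Rightarrow> nat \<Rightarrow> 'k" where
  "matpow n A 0 = (\<lambda>i j. if i = j then 1 else 0)"
| "matpow n A (Suc m) = (\<lambda>i j. \<Sum>k = 1..n. matpow n A m i k * A k j)"

definition matpow_vec :: "('k::field \<Rightarrow> 'e \<Rightarrow> 'e) \<Rightarrow> nat \<Rightarrow> (nat \<Rightarrow> nat \<Rightarrow> 'k)
    \<Rightarrow> nat \<Rightarrow> (nat \<Rightarrow> 'e) \<Rightarrow> nat \<Rightarrow> 'e::ab_group_add" where
  "matpow_vec scale n A m h i = (\<Sum>j = 1..n. scale (matpow n A m i j) (h j))"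

definition matpow_scal :: "nat \<Rightarrow> (nat \<Rightarrow> nat \<Rightarrow> 'k::field) \<Rightarrow> nat \<Rightarrow> (nat \<Rightarrow> 'k) \<Rightarrow> nat \<Rightarrow> 'k" where
  "matpow_scal n A m b i = (\<Sum>j = 1..n. matpow n A m i j * b j)"

text \<open>Plenary powers: plenary mult a m = a^[m] for m \<ge> 1
  (plenary mult a 0 = a, a^[1] = a a, a^[m] = a^[m-1] a^[m-1]).\<close>
fun plenary :: "('e \<Rightarrow> 'e \<Rightarrow> 'e) \<Rightarrow> 'e \<Rightarrow> nat \<Rightarrow> 'e" where
  "plenary mult a 0 = a"
| "plenary mult a (Suc m) = mult (plenary mult a m) (plenary mult a m)"

fun gamma :: "nat \<Rightarrow> (nat \<Rightarrow> nat \<Rightarrow> 'k::field) \<Rightarrow> (nat \<Rightarrow> 'k) \<Rightarrow> nat \<Rightarrow> nat \<Rightarrow> 'k" where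
  "gamma n A b i 0 = 0"
| "gamma n A b i (Suc 0) = 2 * b i"
| "gamma n A b i (Suc (Suc m)) =
     2 * (gamma n A b i (Suc m))\<^sup>2 * matpow_scal n A (Suc m) b i"

definition bilinear_mult :: "('k \<Rightarrow> 'e \<Rightarrow> 'e) \<Rightarrow> ('e \<Rightarrow> 'e \<Rightarrow> 'e::ab_group_add) \<Rightarrow> bool" where
  "bilinear_mult scale mult \<longleftrightarrow>
     (\<forall>x y z. mult (x + y) z = mult x z + mult y z) \<and>
     (\<forall>x y z. mult x (y + z) = mult x y + mult x z) \<and>
     (\<forall>c x y. mult (scale c x) y = scale c (mult x y)) \<and>
     (\<forall>c x y. mult x (scale c y) = scale c (mult x y))"

end

theory Submission
  imports Defs
begin

text \<open>Every element \<open>x = \<Sum>\<^sub>j c\<^sub>j h\<^sub>j + s r\<close> satisfies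
  \<open>x r = \<Sum>\<^sub>j (cA)\<^sub>j h\<^sub>j + (c\<cdot>b) r\<close> and \<open>x x = 2s (x r)\<close>, since the \<open>h\<close>-part and
  \<open>r\<close> annihilate themselves and \<open>h\<^sub>i r = r h\<^sub>i\<close>. Iterating these two identities,
  starting from the coefficient row \<open>c = e\<^sub>i\<close> of \<open>h\<^sub>i\<close>, moves \<open>c\<close> along the rows
  \<open>e\<^sub>i A\<^sup>m\<close>, which gives both formulas.\<close>

definition vec_mat :: "nat \<Rightarrow> (nat \<Rightarrow> 'k::semiring_0) \<Rightarrow> (nat \<Rightarrow> nat \<Rightarrow> 'k) \<Rightarrow> nat \<Rightarrow> 'k" where
  "vec_mat n c A = (\<lambda>k. \<Sum>j = 1..n. c j * A j k)"

definition dot :: "nat \<Rightarrow> (nat \<Rightarrow> 'k::semiring_0) \<Rightarrow> (nat \<Rightarrow> 'k) \<Rightarrow> 'k" where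
  "dot n c v = (\<Sum>j = 1..n. c j * v j)"

lemma matpow_Suc_row: "matpow n A (Suc m) i = vec_mat n (matpow n A m i) A"
  by (simp add: vec_mat_def)

lemma matpow_scal_eq_dot: "matpow_scal n A m v i = dot n (matpow n A m i) v"
  by (simp add: matpow_scal_def dot_def)

lemma dot_matpow_0:
  assumes "i \<in> {1..n}"
  shows "dot n (matpow n A 0 i) v = v i"
proof -
  have "dot n (matpow n A 0 i) v = (\<Sum>j\<in>{1..n}. if j = i then v i else 0)"
    unfolding dot_def by (rule sum.cong) auto
  with assms show ?thesis
    by simp
qed

locale bilinear_algebra = vector_space scale
  for scale :: "'k::field \<Rightarrow> 'e::ab_group_add \<Rightarrow> 'e" +
  fixes mult :: "'e \<Rightarrow> 'e \<Rightarrow> 'e"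
  assumes bilinear: "bilinear_mult scale mult"
begin

lemma mult_add_left: "mult (x + y) z = mult x z + mult y z"
  and mult_add_right: "mult x (y + z) = mult x y + mult x z"
  and mult_scale_left: "mult (scale c x) y = scale c (mult x y)"
  and mult_scale_right: "mult x (scale c y) = scale c (mult x y)"
  using bilinear unfolding bilinear_mult_def by blast+

lemma mult_zero_left: "mult 0 z = 0"
  using mult_add_left[of 0 0 z] by simp

lemma mult_zero_right: "mult z 0 = 0"
  using mult_add_right[of z 0 0] by simp

lemma mult_sum_left: "mult (\<Sum>j\<in>S. f j) z = (\<Sum>j\<in>S. mult (f j) z)"
  by (induction S rule: infinite_finite_induct) (auto simp: mult_zero_left mult_add_left)

lemma mult_sum_right: "mult z (\<Sum>j\<in>S. f j) = (\<Sum>j\<in>S. mult z (f j))"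
  by (induction S rule: infinite_finite_induct) (auto simp: mult_zero_right mult_add_right)

end

locale eacp = bilinear_algebra scale mult
  for scale :: "'k::field \<Rightarrow> 'e::ab_group_add \<Rightarrow> 'e" and mult +
  fixes n :: nat and h :: "nat \<Rightarrow> 'e" and r :: 'e
    and A :: "nat \<Rightarrow> nat \<Rightarrow> 'k" and b :: "nat \<Rightarrow> 'k"
  assumes h_mult_r: "i \<in> {1..n} \<Longrightarrow> mult (h i) r = (\<Sum>j = 1..n. scale (A i j) (h j)) + scale (b i) r"
    and r_mult_h: "i \<in> {1..n} \<Longrightarrow> mult r (h i) = (\<Sum>j = 1..n. scale (A i j) (h j)) + scale (b i) r"
    and h_mult_h: "i \<in> {1..n} \<Longrightarrow> j \<in> {1..n} \<Longrightarrow> mult (h i) (h j) = 0"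
    and r_mult_r: "mult r r = 0"
begin

definition hcomb :: "(nat \<Rightarrow> 'k) \<Rightarrow> 'e" where
  "hcomb c = (\<Sum>j = 1..n. scale (c j) (h j))"

lemma matpow_vec_eq_hcomb: "matpow_vec scale n A m h i = hcomb (matpow n A m i)"
  by (simp add: matpow_vec_def hcomb_def)

lemma hcomb_matpow_0:
  assumes "i \<in> {1..n}"
  shows "hcomb (matpow n A 0 i) = h i"
proof -
  have "hcomb (matpow n A 0 i) = (\<Sum>j\<in>{1..n}. if j = i then h i else 0)"
    unfolding hcomb_def by (rule sum.cong) auto
  with assms show ?thesis
    by simp
qed

lemma hcomb_mult_r: "mult (hcomb c) r = hcomb (vec_mat n c A) + scale (dot n c b) r"
proof -
  have "mult (hcomb c) r = (\<Sum>j = 1..n. scale (c j) (mult (h j) r))"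
    by (simp add: hcomb_def mult_sum_left mult_scale_left)
  also have "\<dots> = (\<Sum>j = 1..n. (\<Sum>k = 1..n. scale (c j * A j k) (h k)) + scale (c j * b j) r)"
    by (rule sum.cong) (auto simp: h_mult_r scale_right_distrib scale_sum_right)
  also have "\<dots> = (\<Sum>j = 1..n. \<Sum>k = 1..n. scale (c j * A j k) (h k)) + scale (dot n c b) r"
    by (simp add: sum.distrib dot_def scale_sum_left)
  also have "(\<Sum>j = 1..n. \<Sum>k = 1..n. scale (c j * A j k) (h k)) = hcomb (vec_mat n c A)"
    unfolding hcomb_def vec_mat_def by (subst sum.swap) (simp add: scale_sum_left)
  finally show ?thesis .
qed

lemma r_mult_hcomb: "mult r (hcomb c) = mult (hcomb c) r"
  by (simp add: hcomb_def mult_sum_left mult_sum_right mult_scale_left mult_scale_right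
      h_mult_r r_mult_h)

lemma hcomb_mult_hcomb: "mult (hcomb c) (hcomb d) = 0"
  by (simp add: hcomb_def mult_sum_left mult_sum_right mult_scale_left mult_scale_right h_mult_h)

lemma general_mult_r:
  "mult (hcomb c + scale s r) r = hcomb (vec_mat n c A) + scale (dot n c b) r"
  by (simp add: mult_add_left mult_scale_left r_mult_r hcomb_mult_r)

lemma general_square:
  "mult (hcomb c + scale s r) (hcomb c + scale s r)
     = scale (2 * s) (hcomb (vec_mat n c A) + scale (dot n c b) r)"
proof -
  have "mult (hcomb c + scale s r) (hcomb c + scale s r)
      = scale s (mult (hcomb c) r) + scale s (mult r (hcomb c))"
    by (simp add: mult_add_left mult_add_right mult_scale_left mult_scale_right
        hcomb_mult_hcomb r_mult_r)
  also have "\<dots> = scale (s + s) (hcomb (vec_mat n c A) + scale (dot n c b) r)"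
    by (simp only: r_mult_hcomb hcomb_mult_r scale_left_distrib)
  finally show ?thesis
    by (simp only: mult_2)
qed

lemma h_mult_r_eq: "i \<in> {1..n} \<Longrightarrow>
    mult (h i) r = hcomb (matpow n A 1 i) + scale (dot n (matpow n A 0 i) b) r"
  using hcomb_mult_r[of "matpow n A 0 i"]
  by (simp only: hcomb_matpow_0 One_nat_def matpow_Suc_row)

lemma right_mult_r_iterate:
  assumes "i \<in> {1..n}"
  shows "((\<lambda>x. mult x r) ^^ Suc m) (h i)
           = matpow_vec scale n A (Suc m) h i + scale (matpow_scal n A m b i) r"
proof (induction m)
  case 0
  show ?case
    using h_mult_r_eq[OF assms] by (simp add: matpow_vec_eq_hcomb matpow_scal_eq_dot)
next
  case (Suc m)
  then show ?case
    by (simp add: matpow_vec_eq_hcomb matpow_scal_eq_dot general_mult_r matpow_Suc_row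
        del: matpow.simps)
qed

lemma plenary_h_mult_r:
  assumes "i \<in> {1..n}"
  shows "plenary mult (mult (h i) r) (Suc m)
           = scale (gamma n A b i (Suc m))
               (matpow_vec scale n A (Suc (Suc m)) h i + scale (matpow_scal n A (Suc m) b i) r)"
proof (induction m)
  case 0
  show ?case
    using h_mult_r_eq[OF assms]
    by (simp add: general_square matpow_vec_eq_hcomb matpow_scal_eq_dot matpow_Suc_row
        dot_matpow_0[OF assms] del: matpow.simps)
next
  case (Suc m)
  have "plenary mult (mult (h i) r) (Suc (Suc m))
      = mult (plenary mult (mult (h i) r) (Suc m)) (plenary mult (mult (h i) r) (Suc m))"
    by (simp only: plenary.simps)
  then show ?case
    unfolding Suc
    by (simp add: mult_scale_left mult_scale_right general_square matpow_vec_eq_hcomb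
        matpow_scal_eq_dot matpow_Suc_row power2_eq_square mult.assoc mult.left_commute
        del: matpow.simps)
qed

end

theorem proposition3p1:
  fixes scale :: "'k::field \<Rightarrow> 'e::ab_group_add \<Rightarrow> 'e"
    and mult :: "'e \<Rightarrow> 'e \<Rightarrow> 'e"
    and n :: nat
    and h :: "nat \<Rightarrow> 'e" and r :: 'e
    and A :: "nat \<Rightarrow> nat \<Rightarrow> 'k" and b :: "nat \<Rightarrow> 'k"
  assumes vs: "vector_space scale"
    and bil: "bilinear_mult scale mult"
    and inj_h: "inj_on h {1..n}" and r_notin: "r \<notin> h ` {1..n}"
    and indep: "\<not> module.dependent scale (insert r (h ` {1..n}))"
    and span: "module.span scale (insert r (h ` {1..n})) = UNIV"
    and hr: "\<And>i. i \<in> {1..n} \<Longrightarrow>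
               mult (h i) r = (\<Sum>j = 1..n. scale (A i j) (h j)) + scale (b i) r"
    and rh: "\<And>i. i \<in> {1..n} \<Longrightarrow>
               mult r (h i) = (\<Sum>j = 1..n. scale (A i j) (h j)) + scale (b i) r"
    and hh: "\<And>i j. i \<in> {1..n} \<Longrightarrow> j \<in> {1..n} \<Longrightarrow> mult (h i) (h j) = 0"
    and rr: "mult r r = 0"
  shows "\<forall>m \<ge> 1. \<forall>i \<in> {1..n}.
           ((\<lambda>x. mult x r) ^^ m) (h i)
             = matpow_vec scale n A m h i + scale (matpow_scal n A (m - 1) b i) r
         \<and> plenary mult (mult (h i) r) m
             = scale (gamma n A b i m)
                 (matpow_vec scale n A (m + 1) h i + scale (matpow_scal n A m b i) r)"
proof (intro allI impI ballI)
  fix m i :: nat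
  assume "1 \<le> m" and i: "i \<in> {1..n}"
  then obtain k where m: "m = Suc k"
    by (cases m) auto
  interpret eacp scale mult n h r A b
    by (intro eacp.intro bilinear_algebra.intro bilinear_algebra_axioms.intro eacp_axioms.intro
        vs bil hr rh hh rr)
  show "((\<lambda>x. mult x r) ^^ m) (h i)
          = matpow_vec scale n A m h i + scale (matpow_scal n A (m - 1) b i) r
        \<and> plenary mult (mult (h i) r) m
          = scale (gamma n A b i m)
              (matpow_vec scale n A (m + 1) h i + scale (matpow_scal n A m b i) r)"
    using right_mult_r_iterate[OF i, of k] plenary_h_mult_r[OF i, of k] by (simp add: m)
qed

end
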